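(* Let $X$ be a topological space. Then $(C(X),\tau_\Gamma)$ is a Baire space.
   Context: $C(X)$ is the set of continuous real-valued functions on $X$, each identified with its graph in $X\times\mathbb{R}$. The graph topology $\tau_\Gamma$ on $C(X)$ has base $\{F_G: G\text{ open in }X\times\mathbb{R}\}$ where $F_G=\{f\in C(X): f\subset G\}$. *)

theory Defs
  imports "HOL-Analysis.Analysis"
begin

definition graph_on :: "'a topology \<Rightarrow> ('a \<Rightarrow> real) \<Rightarrow> ('a \<times> real) set" where
  "graph_on X f = {(x, f x) | x. x \<in> topspace X}"

text \<open>C(X): continuous real-valued functions on X, each identified with its graph.\<close>
definition CX :: "'a topology \<Rightarrow> ('a \<times> real) set set" where
  "CX X = {graph_on X f | f. continuous_map X euclideanreal f}"

definition FG :: "'a topology \<Rightarrow> ('a \<times> real) set \<Rightarrow> ('a \<times> real) set set" where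
  "FG X G = {f \<in> CX X. f \<subseteq> G}"

definition graph_topology :: "'a topology \<Rightarrow> ('a \<times> real) set topology" where
  "graph_topology X =
     topology_generated_by {FG X G | G. openin (prod_topology X euclideanreal) G}"

definition baire_space :: "'a topology \<Rightarrow> bool" where
  "baire_space T \<longleftrightarrow>
     (\<forall>\<G>. countable \<G> \<and> (\<forall>U\<in>\<G>. openin T U \<and> T closure_of U = topspace T)
        \<longrightarrow> T closure_of (topspace T \<inter> \<Inter>\<G>) = topspace T)"

end

theory Submission
  imports Defs
begin

(* The graph topology is Baire by a Cantor-type nested-set argument,
   as for complete metric spaces.  Given open dense sets U_0, U_1, ... and a
   nonempty open W, we construct continuous f_n and open neighbourhoods G_n of
   their graphs with F_{G_0} \<subseteq> W and F_{G_{n+1}} \<subseteq> U_n.  At each step G_{n+1} is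
   shrunk so that (i) it lies in the (1/2)^n-strip around f_n and (ii) every limit
   of a vertical sequence in G_{n+1} stays in G_n.  By (i) the f_n converge
   uniformly to a continuous g; by (ii) the graph of g lies in every G_n, so g
   belongs to W and to every U_n. *)

abbreviation PX :: "'a topology \<Rightarrow> ('a \<times> real) topology" where
  "PX X \<equiv> prod_topology X euclideanreal"

lemma generate_topology_on_local_base:
  assumes Int_closed: "\<And>A B. A \<in> \<S> \<Longrightarrow> B \<in> \<S> \<Longrightarrow> A \<inter> B \<in> \<S>"
    and "generate_topology_on \<S> W" and "h \<in> W"
  shows "\<exists>B\<in>\<S>. h \<in> B \<and> B \<subseteq> W"
  using assms(2,3)
proof (induction arbitrary: h)
  case Empty
  then show ?case by simp
next
  case (Int a b)
  obtain A where A: "A \<in> \<S>" "h \<in> A" "A \<subseteq> a"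
    using Int.IH(1) Int.prems by blast
  obtain B where B: "B \<in> \<S>" "h \<in> B" "B \<subseteq> b"
    using Int.IH(2) Int.prems by blast
  show ?case
  proof
    show "A \<inter> B \<in> \<S>" using Int_closed A(1) B(1) .
    show "h \<in> A \<inter> B \<and> A \<inter> B \<subseteq> a \<inter> b" using A B by blast
  qed
next
  case (UN K)
  then obtain k where k: "k \<in> K" "h \<in> k" by blast
  obtain B where "B \<in> \<S>" "h \<in> B" "B \<subseteq> k"
    using UN.IH[OF k] by blast
  then show ?case using k(1) by blast
next
  case (Basis s)
  then show ?case by blast
qed

lemma baire_space_sequenceI:
  fixes T :: "'a topology"
  assumes seq: "\<And>(U :: nat \<Rightarrow> 'a set) W. (\<And>n. openin T (U n)) \<Longrightarrow> (\<And>n. T closure_of U n = topspace T) \<Longrightarrow>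
                  openin T W \<Longrightarrow> W \<noteq> {} \<Longrightarrow> W \<inter> (\<Inter>n. U n) \<noteq> {}"
  shows "baire_space T"
  unfolding baire_space_def
proof (intro allI impI)
  fix \<G> assume \<G>: "countable \<G> \<and> (\<forall>U\<in>\<G>. openin T U \<and> T closure_of U = topspace T)"
  show "T closure_of (topspace T \<inter> \<Inter>\<G>) = topspace T"
  proof (cases "\<G> = {}")
    case True
    then show ?thesis by simp
  next
    case False
    define U where "U = from_nat_into \<G>"
    have range_U: "range U = \<G>"
      using range_from_nat_into[OF False] \<G> by (simp add: U_def)
    show ?thesis unfolding dense_intersects_open
    proof (intro allI impI)
      fix W assume W: "openin T W \<and> W \<noteq> {}"
      have U_in: "U n \<in> \<G>" for n
        using range_U by (metis rangeI)
      have U_open: "openin T (U n)" and U_dense: "T closure_of U n = topspace T" for n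
        using bspec[OF conjunct2[OF \<G>] U_in] by simp_all
      have "W \<inter> (\<Inter>n. U n) \<noteq> {}"
        using seq[of U W, OF U_open U_dense conjunct1[OF W] conjunct2[OF W]] .
      then have "W \<inter> \<Inter>\<G> \<noteq> {}"
        by (simp add: range_U)
      moreover have "W \<subseteq> topspace T" using W openin_subset by blast
      ultimately show "(topspace T \<inter> \<Inter>\<G>) \<inter> W \<noteq> {}" by blast
    qed
  qed
qed

lemma uniformly_Cauchy_continuous_limit:
  fixes f :: "nat \<Rightarrow> 'a \<Rightarrow> real"
  assumes cont: "\<And>n. continuous_map X euclideanreal (f n)"
    and bound: "\<And>m n x. n \<le> m \<Longrightarrow> x \<in> topspace X \<Longrightarrow> \<bar>f m x - f n x\<bar> \<le> b n"
    and b: "b \<longlonglongrightarrow> 0"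
  obtains g where "continuous_map X euclideanreal g"
    and "\<And>x. x \<in> topspace X \<Longrightarrow> (\<lambda>n. f n x) \<longlonglongrightarrow> g x"
proof -
  have Cauchy: "\<exists>N. \<forall>m n x. N \<le> m \<longrightarrow> N \<le> n \<longrightarrow> x \<in> topspace X \<longrightarrow> dist (f m x) (f n x) < \<epsilon>"
    if "\<epsilon> > 0" for \<epsilon>
  proof -
    obtain N where "\<forall>n\<ge>N. norm (b n - 0) < \<epsilon>/2"
      using LIMSEQ_D[OF b] \<open>\<epsilon> > 0\<close> half_gt_zero by blast
    then have N: "\<bar>b N\<bar> < \<epsilon>/2" by auto
    have "dist (f m x) (f n x) < \<epsilon>" if "N \<le> m" "N \<le> n" "x \<in> topspace X" for m n x
      using bound[OF that(1,3)] bound[OF that(2,3)] N unfolding dist_real_def by linarith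
    then show ?thesis by blast
  qed
  have complete: "Met_TC.mcomplete TYPE(real)"
    by (simp add: complete_UNIV)
  obtain g where g: "continuous_map X euclideanreal g"
    and unif: "\<And>\<epsilon>. 0 < \<epsilon> \<Longrightarrow> \<forall>\<^sub>F n in sequentially. \<forall>x\<in>topspace X. dist (f n x) (g x) < \<epsilon>"
    using Met_TC.continuous_map_uniformly_Cauchy_limit[of X f, OF complete _ Cauchy] cont
    by (simp, blast)
  show thesis
  proof
    show "continuous_map X euclideanreal g" by (rule g)
    fix x assume x: "x \<in> topspace X"
    show "(\<lambda>n. f n x) \<longlonglongrightarrow> g x"
    proof (rule tendstoI)
      fix \<epsilon> :: real assume "0 < \<epsilon>"
      show "\<forall>\<^sub>F n in sequentially. dist (f n x) (g x) < \<epsilon>"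
        by (rule eventually_mono[OF unif[OF \<open>0 < \<epsilon>\<close>]]) (use x in blast)
    qed
  qed
qed

lemma graph_on_subset_iff: "graph_on X f \<subseteq> G \<longleftrightarrow> (\<forall>x\<in>topspace X. (x, f x) \<in> G)"
  by (auto simp: graph_on_def)

lemma graph_on_in_FG:
  assumes "continuous_map X euclideanreal f"
  shows "graph_on X f \<in> FG X G \<longleftrightarrow> (\<forall>x\<in>topspace X. (x, f x) \<in> G)"
  using assms by (auto simp: FG_def CX_def graph_on_subset_iff)

lemma FG_memberE:
  assumes "h \<in> FG X G"
  obtains f where "continuous_map X euclideanreal f" "h = graph_on X f"
    "\<forall>x\<in>topspace X. (x, f x) \<in> G"
  using assms by (auto simp: FG_def CX_def graph_on_subset_iff)

lemma FG_Int: "FG X (G1 \<inter> G2) = FG X G1 \<inter> FG X G2"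
  by (auto simp: FG_def)

lemma FG_mono: "G1 \<subseteq> G2 \<Longrightarrow> FG X G1 \<subseteq> FG X G2"
  by (auto simp: FG_def)

lemma openin_FG: "openin (PX X) G \<Longrightarrow> openin (graph_topology X) (FG X G)"
  unfolding graph_topology_def by (rule topology_generated_by_Basis) blast

lemma graph_topology_local_base:
  assumes "openin (graph_topology X) W" and "h \<in> W"
  shows "\<exists>G. openin (PX X) G \<and> h \<in> FG X G \<and> FG X G \<subseteq> W"
proof -
  let ?\<S> = "{FG X G | G. openin (PX X) G}"
  have Int_closed: "A \<inter> B \<in> ?\<S>" if A: "A \<in> ?\<S>" and B: "B \<in> ?\<S>" for A B
  proof -
    obtain G1 G2 where "A = FG X G1" "openin (PX X) G1" "B = FG X G2" "openin (PX X) G2"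
      using A B by blast
    then show ?thesis by (metis (mono_tags, lifting) FG_Int mem_Collect_eq openin_Int)
  qed
  have "generate_topology_on ?\<S> W"
    using assms(1) unfolding graph_topology_def by (rule openin_topology_generated_by)
  then obtain B where "B \<in> ?\<S>" "h \<in> B" "B \<subseteq> W"
    using generate_topology_on_local_base[OF Int_closed _ assms(2)] by blast
  then show ?thesis by blast
qed

lemma graph_topology_nonempty_openE:
  assumes "openin (graph_topology X) W" and "W \<noteq> {}"
  obtains f G where "continuous_map X euclideanreal f" "openin (PX X) G"
    "\<forall>x\<in>topspace X. (x, f x) \<in> G" "FG X G \<subseteq> W"
proof -
  obtain h where "h \<in> W" using assms(2) by blast
  then obtain G where G: "openin (PX X) G" "h \<in> FG X G" "FG X G \<subseteq> W"
    using graph_topology_local_base[OF assms(1)] by blast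
  obtain f where "continuous_map X euclideanreal f" "\<forall>x\<in>topspace X. (x, f x) \<in> G"
    using FG_memberE[OF G(2)] by metis
  with G that show thesis by blast
qed

definition tube :: "('a \<Rightarrow> real) \<Rightarrow> 'a set \<Rightarrow> real \<Rightarrow> ('a \<times> real) set" where
  "tube f V \<delta> = {(x, y). x \<in> V \<and> \<bar>y - f x\<bar> < \<delta>}"

lemma openin_tube:
  assumes V: "openin X V" and f: "continuous_map X euclideanreal f"
  shows "openin (PX X) (tube f V \<delta>)"
proof -
  have dist_cont: "continuous_map (PX X) euclideanreal (\<lambda>p. snd p - f (fst p))"
    using continuous_map_diff[OF continuous_map_snd continuous_map_compose[OF continuous_map_fst f]]
    by (simp add: o_def)
  have "tube f V \<delta> = (V \<times> UNIV) \<inter> {p \<in> topspace (PX X). snd p - f (fst p) \<in> {-\<delta><..<\<delta>}}"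
    using openin_subset[OF V] by (auto simp: tube_def abs_less_iff)
  moreover have "openin (PX X) (V \<times> UNIV)"
    using V by (simp add: openin_prod_Times_iff)
  ultimately show ?thesis
    using openin_continuous_map_preimage[OF dist_cont, of "{-\<delta><..<\<delta>}"] by (simp add: openin_Int)
qed

lemma local_double_tube:
  assumes f: "continuous_map X euclideanreal f" and G: "openin (PX X) G"
    and x: "x \<in> topspace X" and "(x, f x) \<in> G" and e: "0 < e"
  obtains V \<delta> where "openin X V" "x \<in> V" "0 < \<delta>" "\<delta> \<le> e" "tube f V (2 * \<delta>) \<subseteq> G"
proof -
  obtain U W where UW: "openin X U" "openin euclideanreal W" "x \<in> U" "f x \<in> W" "U \<times> W \<subseteq> G"
    using G \<open>(x, f x) \<in> G\<close> by (metis openin_prod_topology_alt)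
  obtain r where r: "r > 0" "ball (f x) r \<subseteq> W"
    using UW(2,4) open_contains_ball by (metis open_openin)
  define V where "V = U \<inter> {x' \<in> topspace X. f x' \<in> ball (f x) (r/2)}"
  define \<delta> where "\<delta> = min (r/4) e"
  have "openin X V"
    unfolding V_def using UW(1) openin_continuous_map_preimage[OF f, of "ball (f x) (r/2)"]
    by (simp add: openin_Int open_openin[symmetric])
  moreover have "x \<in> V" using x UW(3) r(1) by (simp add: V_def)
  moreover have "0 < \<delta>" "\<delta> \<le> e" using r(1) e by (auto simp: \<delta>_def)
  moreover have "tube f V (2 * \<delta>) \<subseteq> G"
  proof
    fix p assume "p \<in> tube f V (2 * \<delta>)"
    then obtain x' y' where p: "p = (x', y')" "x' \<in> V" "\<bar>y' - f x'\<bar> < 2 * \<delta>"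
      by (auto simp: tube_def)
    have "\<bar>f x' - f x\<bar> < r/2" using p(2) by (auto simp: V_def dist_real_def abs_minus_commute)
    moreover have "2 * \<delta> \<le> r/2" by (simp add: \<delta>_def)
    ultimately have "\<bar>f x - y'\<bar> < r"
      using p(3) unfolding abs_less_iff by linarith
    then have "y' \<in> ball (f x) r" by (simp add: dist_real_def)
    then show "p \<in> G" using p(1,2) r(2) UW(5) by (auto simp: V_def)
  qed
  ultimately show thesis using that by blast
qed

(* If every term of a vertical sequence lies in a tube whose double lies in G, then so
   does its limit: the limit is at most twice as far from the graph as the tubes allow. *)
lemma limit_in_doubled_tubes:
  fixes f :: "'a \<Rightarrow> real" and ys :: "nat \<Rightarrow> real"
  assumes tubes: "\<And>m. \<exists>V \<delta>. x \<in> V \<and> \<bar>ys m - f x\<bar> < \<delta> \<and> tube f V (2 * \<delta>) \<subseteq> G"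
    and lim: "ys \<longlonglongrightarrow> c"
  shows "(x, c) \<in> G"
proof (rule ccontr)
  assume out: "(x, c) \<notin> G"
  define D where "D = \<bar>c - f x\<bar>"
  have half: "\<bar>ys m - f x\<bar> < D / 2" for m
  proof -
    obtain V \<delta> where "x \<in> V" and close: "\<bar>ys m - f x\<bar> < \<delta>" and "tube f V (2 * \<delta>) \<subseteq> G"
      using tubes by blast
    with out have "(x, c) \<notin> tube f V (2 * \<delta>)" by blast
    with \<open>x \<in> V\<close> have "2 * \<delta> \<le> D"
      by (simp add: tube_def D_def not_less)
    with close show ?thesis by simp
  qed
  have "(\<lambda>m. \<bar>ys m - f x\<bar>) \<longlonglongrightarrow> D"
    unfolding D_def by (intro tendsto_intros lim)
  then have "D \<le> D / 2"
    by (rule LIMSEQ_le_const2) (use half less_imp_le in blast)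
  moreover have "0 < D"
    using half[of 0] abs_ge_zero[of "ys 0 - f x"] by linarith
  ultimately show False by linarith
qed

lemma shrink_graph_neighbourhood:
  assumes f: "continuous_map X euclideanreal f" and G: "openin (PX X) G"
    and graph: "\<forall>x\<in>topspace X. (x, f x) \<in> G" and e: "0 < e"
  obtains H where "openin (PX X) H" "\<forall>x\<in>topspace X. (x, f x) \<in> H" "H \<subseteq> G"
    "\<forall>x y. (x, y) \<in> H \<longrightarrow> \<bar>y - f x\<bar> < e"
    "\<forall>x ys c. (\<forall>m. (x, ys m) \<in> H) \<longrightarrow> ys \<longlonglongrightarrow> c \<longrightarrow> (x, c) \<in> G"
proof -
  define good where "good V \<delta> \<longleftrightarrow> openin X V \<and> 0 < \<delta> \<and> \<delta> \<le> e \<and> tube f V (2 * \<delta>) \<subseteq> G"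
    for V \<delta>
  define H where "H = (\<Union>(V, \<delta>) \<in> {(V, \<delta>). good V \<delta>}. tube f V \<delta>)"
  have memH: "(x, y) \<in> H \<longleftrightarrow> (\<exists>V \<delta>. good V \<delta> \<and> x \<in> V \<and> \<bar>y - f x\<bar> < \<delta>)" for x y
    by (auto simp: H_def tube_def)
  have "openin (PX X) H"
    unfolding H_def using f by (auto simp: good_def intro!: openin_Union openin_tube)
  moreover have "\<forall>x\<in>topspace X. (x, f x) \<in> H"
  proof
    fix x assume x: "x \<in> topspace X"
    obtain V \<delta> where "openin X V" "x \<in> V" "0 < \<delta>" "\<delta> \<le> e" "tube f V (2 * \<delta>) \<subseteq> G"
      using local_double_tube[OF f G x _ e] graph x by blast
    then show "(x, f x) \<in> H" by (auto simp: memH good_def)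
  qed
  moreover have "H \<subseteq> G"
  proof
    fix p assume "p \<in> H"
    then obtain x y V \<delta> where "p = (x, y)" "good V \<delta>" "x \<in> V" "\<bar>y - f x\<bar> < \<delta>"
      by (metis memH surj_pair)
    then show "p \<in> G" by (auto simp: good_def tube_def)
  qed
  moreover have "\<forall>x y. (x, y) \<in> H \<longrightarrow> \<bar>y - f x\<bar> < e"
    by (auto simp: memH good_def)
  moreover have "\<forall>x ys c. (\<forall>m. (x, ys m) \<in> H) \<longrightarrow> ys \<longlonglongrightarrow> c \<longrightarrow> (x, c) \<in> G"
  proof (intro allI impI)
    fix x ys c assume inH: "\<forall>m. (x, ys m) \<in> H" and lim: "ys \<longlonglongrightarrow> c"
    have "\<exists>V \<delta>. x \<in> V \<and> \<bar>ys m - f x\<bar> < \<delta> \<and> tube f V (2 * \<delta>) \<subseteq> G" for m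
      using inH unfolding memH good_def by blast
    then show "(x, c) \<in> G" using lim by (rule limit_in_doubled_tubes)
  qed
  ultimately show thesis by (rule that)
qed

lemma refinement_step:
  assumes U_open: "openin (graph_topology X) U"
    and U_dense: "graph_topology X closure_of U = topspace (graph_topology X)"
    and f: "continuous_map X euclideanreal f" and G: "openin (PX X) G"
    and graph: "\<forall>x\<in>topspace X. (x, f x) \<in> G" and e: "0 < e"
  obtains f' G' where "continuous_map X euclideanreal f'" "openin (PX X) G'"
    "\<forall>x\<in>topspace X. (x, f' x) \<in> G'" "FG X G' \<subseteq> U" "G' \<subseteq> G"
    "\<forall>x y. (x, y) \<in> G' \<longrightarrow> \<bar>y - f x\<bar> < e"
    "\<forall>x ys c. (\<forall>m. (x, ys m) \<in> G') \<longrightarrow> ys \<longlonglongrightarrow> c \<longrightarrow> (x, c) \<in> G"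
proof -
  obtain H where H: "openin (PX X) H" "\<forall>x\<in>topspace X. (x, f x) \<in> H" "H \<subseteq> G"
    "\<forall>x y. (x, y) \<in> H \<longrightarrow> \<bar>y - f x\<bar> < e"
    "\<forall>x ys c. (\<forall>m. (x, ys m) \<in> H) \<longrightarrow> ys \<longlonglongrightarrow> c \<longrightarrow> (x, c) \<in> G"
    by (rule shrink_graph_neighbourhood[OF f G graph e])
  have FH_open: "openin (graph_topology X) (FG X H)"
    by (rule openin_FG[OF H(1)])
  have "graph_on X f \<in> FG X H"
    using graph_on_in_FG[OF f] H(2) by simp
  then have "U \<inter> FG X H \<noteq> {}"
    using U_dense FH_open unfolding dense_intersects_open by blast
  moreover have "openin (graph_topology X) (U \<inter> FG X H)"
    using U_open FH_open by (rule openin_Int)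
  ultimately obtain f' G'' where f': "continuous_map X euclideanreal f'" "openin (PX X) G''"
    "\<forall>x\<in>topspace X. (x, f' x) \<in> G''" "FG X G'' \<subseteq> U \<inter> FG X H"
    using graph_topology_nonempty_openE by metis
  have "graph_on X f' \<in> FG X H"
    using f'(3,4) graph_on_in_FG[OF f'(1)] by blast
  then have graph_H: "\<forall>x\<in>topspace X. (x, f' x) \<in> H"
    using graph_on_in_FG[OF f'(1)] by simp
  show thesis
  proof (rule that[of f' "G'' \<inter> H"])
    show "openin (PX X) (G'' \<inter> H)" using f'(2) H(1) by (rule openin_Int)
    show "FG X (G'' \<inter> H) \<subseteq> U" using FG_mono[of "G'' \<inter> H" G'' X] f'(4) by blast
  qed (use f'(1,3) graph_H H(3-5) in blast)+
qed

lemma nested_graph_neighbourhoods_limit: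
  fixes f :: "nat \<Rightarrow> 'a \<Rightarrow> real" and G :: "nat \<Rightarrow> ('a \<times> real) set"
  assumes cont: "\<And>n. continuous_map X euclideanreal (f n)"
    and graph: "\<And>n x. x \<in> topspace X \<Longrightarrow> (x, f n x) \<in> G n"
    and dec: "\<And>n. G (Suc n) \<subseteq> G n"
    and strip: "\<And>n x y. (x, y) \<in> G (Suc n) \<Longrightarrow> \<bar>y - f n x\<bar> < b n"
    and fibre: "\<And>n x ys c. \<forall>m. (x, ys m) \<in> G (Suc n) \<Longrightarrow> ys \<longlonglongrightarrow> c \<Longrightarrow> (x, c) \<in> G n"
    and b: "b \<longlonglongrightarrow> 0"
  obtains g where "continuous_map X euclideanreal g" "\<And>n x. x \<in> topspace X \<Longrightarrow> (x, g x) \<in> G n"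
proof -
  have G_anti: "G m \<subseteq> G n" if "n \<le> m" for m n
    using decseqD[OF decseq_SucI[of G, OF dec] that] .
  have bound: "\<bar>f m x - f n x\<bar> \<le> b n" if "n \<le> m" "x \<in> topspace X" for m n x
  proof (cases "n = m")
    case True
    have "\<bar>f (Suc n) x - f n x\<bar> < b n" using strip graph[OF that(2)] .
    then show ?thesis using True by simp
  next
    case False
    then have "G m \<subseteq> G (Suc n)" using that(1) G_anti by simp
    then show ?thesis using strip graph[OF that(2)] less_imp_le by blast
  qed
  obtain g where g: "continuous_map X euclideanreal g"
    and lim: "\<And>x. x \<in> topspace X \<Longrightarrow> (\<lambda>n. f n x) \<longlonglongrightarrow> g x"
    using uniformly_Cauchy_continuous_limit[OF cont bound b] by blast
  have "(x, g x) \<in> G n" if x: "x \<in> topspace X" for n x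
  proof (rule fibre)
    show "\<forall>m. (x, f (m + Suc n) x) \<in> G (Suc n)"
      using G_anti graph[OF x] by (meson le_add2 subsetD)
    show "(\<lambda>m. f (m + Suc n) x) \<longlonglongrightarrow> g x"
      using LIMSEQ_ignore_initial_segment[OF lim[OF x]] .
  qed
  with g that show thesis by blast
qed

lemma graph_topology_open_meets_dense_sequence:
  fixes X :: "'a topology" and U :: "nat \<Rightarrow> ('a \<times> real) set set"
  assumes U_open: "\<And>n. openin (graph_topology X) (U n)"
    and U_dense: "\<And>n. graph_topology X closure_of U n = topspace (graph_topology X)"
    and W_open: "openin (graph_topology X) W" and W_ne: "W \<noteq> {}"
  shows "W \<inter> (\<Inter>n. U n) \<noteq> {}"
proof -
  define V where "V n = (case n of 0 \<Rightarrow> W | Suc k \<Rightarrow> U k)" for n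
  define admissible where "admissible n fG \<longleftrightarrow> continuous_map X euclideanreal (fst fG)
      \<and> openin (PX X) (snd fG) \<and> (\<forall>x\<in>topspace X. (x, fst fG x) \<in> snd fG) \<and> FG X (snd fG) \<subseteq> V n"
    for n and fG :: "('a \<Rightarrow> real) \<times> ('a \<times> real) set"
  define refines where "refines n fG fG' \<longleftrightarrow> snd fG' \<subseteq> snd fG
      \<and> (\<forall>x y. (x, y) \<in> snd fG' \<longrightarrow> \<bar>y - fst fG x\<bar> < (1/2) ^ n)
      \<and> (\<forall>x ys c. (\<forall>m. (x, ys m) \<in> snd fG') \<longrightarrow> ys \<longlonglongrightarrow> c \<longrightarrow> (x, c) \<in> snd fG)"
    for n and fG fG' :: "('a \<Rightarrow> real) \<times> ('a \<times> real) set"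
  have start: "\<exists>fG. admissible 0 fG"
  proof -
    obtain f G where "continuous_map X euclideanreal f" "openin (PX X) G"
      "\<forall>x\<in>topspace X. (x, f x) \<in> G" "FG X G \<subseteq> W"
      using graph_topology_nonempty_openE[OF W_open W_ne] by metis
    then have "admissible 0 (f, G)" by (simp add: admissible_def V_def)
    then show ?thesis ..
  qed
  have step: "\<exists>fG'. admissible (Suc n) fG' \<and> refines n fG fG'" if adm: "admissible n fG" for n fG
  proof -
    have fG: "continuous_map X euclideanreal (fst fG)" "openin (PX X) (snd fG)"
      "\<forall>x\<in>topspace X. (x, fst fG x) \<in> snd fG"
      using adm by (simp_all add: admissible_def)
    have pos: "(0::real) < (1/2) ^ n" by simp
    obtain f' G' where "continuous_map X euclideanreal f'" "openin (PX X) G'"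
      "\<forall>x\<in>topspace X. (x, f' x) \<in> G'" "FG X G' \<subseteq> U n" "G' \<subseteq> snd fG"
      "\<forall>x y. (x, y) \<in> G' \<longrightarrow> \<bar>y - fst fG x\<bar> < (1/2) ^ n"
      "\<forall>x ys c. (\<forall>m. (x, ys m) \<in> G') \<longrightarrow> ys \<longlonglongrightarrow> c \<longrightarrow> (x, c) \<in> snd fG"
      by (rule refinement_step[OF U_open U_dense fG pos])
    then have "admissible (Suc n) (f', G') \<and> refines n fG (f', G')"
      by (simp add: admissible_def refines_def V_def)
    then show ?thesis ..
  qed
  obtain s where s: "\<And>n. admissible n (s n) \<and> refines n (s n) (s (Suc n))"
    using dependent_nat_choice[of admissible refines, OF start step] by blast
  obtain g where g: "continuous_map X euclideanreal g"
    and graph_g: "\<And>n x. x \<in> topspace X \<Longrightarrow> (x, g x) \<in> snd (s n)"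
  proof (rule nested_graph_neighbourhoods_limit[of X "\<lambda>n. fst (s n)" "\<lambda>n. snd (s n)" "\<lambda>n. (1/2) ^ n"])
    show "(\<lambda>n. (1/2::real) ^ n) \<longlonglongrightarrow> 0" by (rule LIMSEQ_realpow_zero) simp_all
  qed (use s in \<open>auto simp: admissible_def refines_def\<close>)
  have "graph_on X g \<in> V n" for n
    using s[of n] graph_on_in_FG[OF g] graph_g by (auto simp: admissible_def)
  then have "graph_on X g \<in> W \<inter> (\<Inter>n. U n)"
    using V_def by (metis IntI INT_I old.nat.simps(4,5))
  then show ?thesis by blast
qed

theorem proposition2p3:
  fixes X :: "'a topology"
  shows "baire_space (graph_topology X)"
  by (rule baire_space_sequenceI, rule graph_topology_open_meets_dense_sequence)

end
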